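(* Let $f\in\mathbb{R}^{d_1\times\cdots\times d_m}$, $f\ge0$, be weakly irreducible and $1<p_1,\ldots,p_m<\infty$ such that there exists $i\in[m]$ with $(m-1)p_i'\le p_k$ for all $k\in[m]\setminus\{i\}$. Let $(\lambda_-^k)_{k\in\mathbb N}$, $(\lambda_+^k)_{k\in\mathbb N}$ be the sequences produced by HGPM. Then $$\lambda_-^k\le\lambda_-^{k+1}\le\|f\|_{p_1,\ldots,p_m}\le\lambda_+^{k+1}\le\lambda_+^k\qquad\forall k\in\mathbb N,$$ and when the algorithm stops (i.e. at the first $k$ with $\lambda_+^k-\lambda_-^k<\epsilon$) we have $\big|\tfrac{\lambda_-^k+\lambda_+^k}{2}-\|f\|_{p_1,\ldots,p_m}\big|<\epsilon$.
   Context: $f$ is identified with the multilinear form $f(\mathbf x)=\sum f_{j_1,\ldots,j_m}x_{1,j_1}\cdots x_{m,j_m}$; $\nabla_kf(\mathbf x)$ is the vector of partials $\partial f/\partial x_{k,j_k}$ (independent of $\mathbf x_k$, so $\nabla_if$ is defined on $\mathcal R^{d-d_i}=\prod_{k\ne i}\mathbb{R}^{d_k}$). $p'=p/(p-1)$; $\psi_q(\mathbf y)_j=|y_j|^{q-1}\mathrm{sign}(y_j)$. $\|f\|_{p_1,\ldots,p_m}=\max|f(\mathbf x)|/\prod_k\|\mathbf x_k\|_{p_k}$. $\mathcal S^{d-d_i}_{++}=\{\mathbf x\in\mathcal R^{d-d_i}:\mathbf x>0,\|\mathbf x_k\|_{p_k}=1\ \forall k\ne i\}$. For $k\ne i$,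 $s_{i,k}(\mathbf x)=\psi_{p_k'}\big(\nabla_kf(\mathbf x_1,\ldots,\mathbf x_{i-1},\psi_{p_i'}(\nabla_if(\mathbf x)),\mathbf x_{i+1},\ldots,\mathbf x_m)\big)$. HGPM with this index $i$ (if $m=2$, $i$ chosen with $p_i\le p_k$ for $k\ne i$), tolerance $\epsilon>0$ and starting point $\mathbf x^0\in\mathcal S^{d-d_i}_{++}$: for $k=0,1,\dots$, $\mathbf z^k=(s_{i,l}(\mathbf x^k))_{l\ne i}$, $\lambda_-^{k+1}=\prod_{l\ne i}\min_{j_l}(z^k_{l,j_l}/x^k_{l,j_l})^{(p_l-1)/(p_i'(m-1))}$, $\lambda_+^{k+1}=\prod_{l\ne i}\max_{j_l}(z^k_{l,j_l}/x^k_{l,j_l})^{(p_l-1)/(p_i'(m-1))}$, $\mathbf x^{k+1}=(\mathbf z^k_l/\|\mathbf z^k_l\|_{p_l})_{l\ne i}$; stop when $\lambda_+^k-\lambda_-^k<\epsilon$. The $\lambda$-sequences are indexed by $\mathbb N=\{1,2,\dots\}$. Weak irreducibility: the undirected graph on $\bigcup_k\{k\}\times[d_k]$ with $(k,j_k)\sim(l,j_l)$ ($k\ne l$) iff $f_{j_1,\ldots,j_m}>0$ for some choice of the remaining indices, is connected. *)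

theory Defs
  imports Complex_Main "HOL-Library.FuncSet"
begin

text \<open>Modes are indexed 0..m-1, the entries of mode k by 0..d k - 1.
  A tensor is a function on index tuples J (with J k < d k for k < m).
  A point of the product space is x :: nat => nat => real, x k being the
  vector of mode k (entries j < d k).\<close>

definition idx :: "nat \<Rightarrow> (nat \<Rightarrow> nat) \<Rightarrow> (nat \<Rightarrow> nat) set" where
  "idx m d = PiE {..<m} (\<lambda>k. {..<d k})"

definition multiform :: "nat \<Rightarrow> (nat \<Rightarrow> nat) \<Rightarrow> ((nat \<Rightarrow> nat) \<Rightarrow> real) \<Rightarrow> (nat \<Rightarrow> nat \<Rightarrow> real) \<Rightarrow> real" where
  "multiform m d f x = (\<Sum>J\<in>idx m d. f J * (\<Prod>k<m. x k (J k)))"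

definition grad :: "nat \<Rightarrow> (nat \<Rightarrow> nat) \<Rightarrow> ((nat \<Rightarrow> nat) \<Rightarrow> real) \<Rightarrow> nat \<Rightarrow> (nat \<Rightarrow> nat \<Rightarrow> real) \<Rightarrow> nat \<Rightarrow> real" where
  "grad m d f k x j = (\<Sum>J\<in>{J\<in>idx m d. J k = j}. f J * (\<Prod>l\<in>{..<m} - {k}. x l (J l)))"

definition pnorm :: "real \<Rightarrow> nat \<Rightarrow> (nat \<Rightarrow> real) \<Rightarrow> real" where
  "pnorm p n v = (\<Sum>j<n. \<bar>v j\<bar> powr p) powr (1 / p)"

definition hconj :: "real \<Rightarrow> real" where
  "hconj p = p / (p - 1)"

definition psi :: "real \<Rightarrow> (nat \<Rightarrow> real) \<Rightarrow> nat \<Rightarrow> real" where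
  "psi q v j = \<bar>v j\<bar> powr (q - 1) * sgn (v j)"

definition tnorm :: "nat \<Rightarrow> (nat \<Rightarrow> nat) \<Rightarrow> (nat \<Rightarrow> real) \<Rightarrow> ((nat \<Rightarrow> nat) \<Rightarrow> real) \<Rightarrow> real" where
  "tnorm m d p f = Sup {\<bar>multiform m d f x\<bar> / (\<Prod>k<m. pnorm (p k) (d k) (x k)) | x.
        \<forall>k<m. \<exists>j<d k. x k j \<noteq> 0}"

definition wi_edge :: "nat \<Rightarrow> (nat \<Rightarrow> nat) \<Rightarrow> ((nat \<Rightarrow> nat) \<Rightarrow> real) \<Rightarrow> ((nat \<times> nat) \<times> (nat \<times> nat)) set" where
  "wi_edge m d f = {((k, a), (l, b)) | k a l b. k \<noteq> l \<and>
        (\<exists>J\<in>idx m d. J k = a \<and> J l = b \<and> f J > 0)}"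

definition weakly_irreducible :: "nat \<Rightarrow> (nat \<Rightarrow> nat) \<Rightarrow> ((nat \<Rightarrow> nat) \<Rightarrow> real) \<Rightarrow> bool" where
  "weakly_irreducible m d f \<longleftrightarrow>
     (\<forall>u\<in>Sigma {..<m} (\<lambda>k. {..<d k}). \<forall>v\<in>Sigma {..<m} (\<lambda>k. {..<d k}).
        (u, v) \<in> (wi_edge m d f)\<^sup>*)"

text \<open>z^k = (s_{i,l}(x^k))_{l \<noteq> i}; the i-th component is unused (set to 0)\<close>
definition hgpm_z :: "nat \<Rightarrow> (nat \<Rightarrow> nat) \<Rightarrow> (nat \<Rightarrow> real) \<Rightarrow> ((nat \<Rightarrow> nat) \<Rightarrow> real) \<Rightarrow> nat
     \<Rightarrow> (nat \<Rightarrow> nat \<Rightarrow> real) \<Rightarrow> nat \<Rightarrow> nat \<Rightarrow> real" where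
  "hgpm_z m d p f i x l =
     (if l = i then (\<lambda>_. 0)
      else psi (hconj (p l))
             (grad m d f l (x(i := psi (hconj (p i)) (grad m d f i x)))))"

definition hgpm_next :: "nat \<Rightarrow> (nat \<Rightarrow> nat) \<Rightarrow> (nat \<Rightarrow> real) \<Rightarrow> ((nat \<Rightarrow> nat) \<Rightarrow> real) \<Rightarrow> nat
     \<Rightarrow> (nat \<Rightarrow> nat \<Rightarrow> real) \<Rightarrow> nat \<Rightarrow> nat \<Rightarrow> real" where
  "hgpm_next m d p f i x l =
     (let z = hgpm_z m d p f i x in
      if l = i then (\<lambda>_. 0) else (\<lambda>j. z l j / pnorm (p l) (d l) (z l)))"

definition hgpm_x :: "nat \<Rightarrow> (nat \<Rightarrow> nat) \<Rightarrow> (nat \<Rightarrow> real) \<Rightarrow> ((nat \<Rightarrow> nat) \<Rightarrow> real) \<Rightarrow> nat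
     \<Rightarrow> (nat \<Rightarrow> nat \<Rightarrow> real) \<Rightarrow> nat \<Rightarrow> nat \<Rightarrow> nat \<Rightarrow> real" where
  "hgpm_x m d p f i x0 k = (hgpm_next m d p f i ^^ k) x0"

text \<open>lambda_-^{k} and lambda_+^{k} for k >= 1 (computed from x^{k-1} and z^{k-1})\<close>
definition hgpm_lam_minus :: "nat \<Rightarrow> (nat \<Rightarrow> nat) \<Rightarrow> (nat \<Rightarrow> real) \<Rightarrow> ((nat \<Rightarrow> nat) \<Rightarrow> real) \<Rightarrow> nat
     \<Rightarrow> (nat \<Rightarrow> nat \<Rightarrow> real) \<Rightarrow> nat \<Rightarrow> real" where
  "hgpm_lam_minus m d p f i x0 k =
     (let x = hgpm_x m d p f i x0 (k - 1); z = hgpm_z m d p f i x in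
      \<Prod>l\<in>{..<m} - {i}. Min ((\<lambda>j. (z l j / x l j) powr ((p l - 1) / (hconj (p i) * (real m - 1)))) ` {..<d l}))"

definition hgpm_lam_plus :: "nat \<Rightarrow> (nat \<Rightarrow> nat) \<Rightarrow> (nat \<Rightarrow> real) \<Rightarrow> ((nat \<Rightarrow> nat) \<Rightarrow> real) \<Rightarrow> nat
     \<Rightarrow> (nat \<Rightarrow> nat \<Rightarrow> real) \<Rightarrow> nat \<Rightarrow> real" where
  "hgpm_lam_plus m d p f i x0 k =
     (let x = hgpm_x m d p f i x0 (k - 1); z = hgpm_z m d p f i x in
      \<Prod>l\<in>{..<m} - {i}. Max ((\<lambda>j. (z l j / x l j) powr ((p l - 1) / (hconj (p i) * (real m - 1)))) ` {..<d l}))"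

end

theory Submission
  imports Defs "HOL-Analysis.Convex"
begin

text \<open>
  Fix a positive point \<open>x\<close> on the unit spheres, let \<open>\<xi>\<close> be \<open>x\<close> with its \<open>i\<close>-th block
  replaced by \<open>\<psi>\<^sub>p\<^sub>i\<^sub>'(\<nabla>\<^sub>if(x))\<close>, and let \<open>z = (s\<^sub>i\<^sub>,\<^sub>l(x))\<^sub>l\<close>. By Euler's identity
  \<open>f(\<xi>) = \<Sum>\<^sub>j (\<nabla>\<^sub>if(x))\<^sub>j\<^sup>p\<^sup>i\<^sup>' = \<Sum>\<^sub>j x\<^sub>l\<^sub>j (\<nabla>\<^sub>lf(\<xi>))\<^sub>j\<close> for each \<open>l \<noteq> i\<close>: the second form
  bounds \<open>min\<^sub>j z\<^sub>l\<^sub>j/x\<^sub>l\<^sub>j\<close>, the first evaluates the quotient defining \<open>\<parallel>f\<parallel>\<close> at \<open>\<xi>\<close>,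
  and together they give \<open>\<lambda>\<^sub>- \<le> \<parallel>f\<parallel>\<close>. For \<open>\<parallel>f\<parallel> \<le> \<lambda>\<^sub>+\<close>, each monomial of \<open>f(w)\<close>, \<open>w\<close> on
  the unit spheres, is compared with the same monomial of \<open>f(\<xi>)\<close> by the weighted AM-GM
  inequality with weights \<open>1/p\<^sub>i\<close> and \<open>1/s\<close>, \<open>s = (m-1)p\<^sub>i'\<close>; Euler's identity and
  Young's inequality (which needs \<open>s \<le> p\<^sub>l\<close>) bound the resulting sums.
  Monotonicity: \<open>x \<mapsto> z\<close> is monotone and multi-homogeneous, so the bound
  \<open>c\<^sub>l x\<^sub>l \<le> x\<^sub>l\<^sup>+\<close> for the next iterate, \<open>c\<^sub>l = min\<^sub>j(z\<^sub>l\<^sub>j/x\<^sub>l\<^sub>j) / \<parallel>z\<^sub>l\<parallel> \<le> 1\<close>, propagates to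
  its ratios, and \<open>c\<^sub>l \<le> 1\<close> with \<open>(p\<^sub>l - 1)/s \<ge> 1 - 1/s\<close> yields \<open>\<lambda>\<^sub>-\<^sup>k \<le> \<lambda>\<^sub>-\<^sup>k\<^sup>+\<^sup>1\<close>;
  symmetrically for \<open>\<lambda>\<^sub>+\<close>. The stopping estimate holds because \<open>\<parallel>f\<parallel> \<in> [\<lambda>\<^sub>-\<^sup>k, \<lambda>\<^sub>+\<^sup>k]\<close>.
\<close>

section \<open>Multilinear forms and their partial gradients\<close>

lemma finite_idx: "finite (idx m d)"
  by (simp add: idx_def finite_PiE)

lemma idx_less: "J \<in> idx m d \<Longrightarrow> k < m \<Longrightarrow> J k < d k"
  by (auto simp: idx_def PiE_def Pi_def)

lemma sum_idx_eq_sum_grad: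
  assumes "k < m"
  shows "(\<Sum>J\<in>idx m d. f J * (\<Prod>l<m. v l (J l)) * \<phi> (J k))
       = (\<Sum>j<d k. v k j * grad m d f k v j * \<phi> j)"
proof -
  have split: "(\<Prod>l<m. v l (J l)) = v k (J k) * (\<Prod>l\<in>{..<m} - {k}. v l (J l))" for J
    using assms by (subst prod.remove[of "{..<m}" k]) auto
  have "(\<Sum>J\<in>idx m d. f J * (\<Prod>l<m. v l (J l)) * \<phi> (J k))
      = (\<Sum>j<d k. \<Sum>J\<in>{J \<in> idx m d. J k = j}. f J * (\<Prod>l<m. v l (J l)) * \<phi> (J k))"
    using assms idx_less by (intro sum.group[symmetric] finite_idx) auto
  also have "\<dots> = (\<Sum>j<d k. v k j * grad m d f k v j * \<phi> j)"
    unfolding grad_def split sum_distrib_left sum_distrib_right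
    by (intro sum.cong refl) (auto simp: algebra_simps)
  finally show ?thesis .
qed

lemma multiform_eq_sum_grad:
  "k < m \<Longrightarrow> multiform m d f v = (\<Sum>j<d k. v k j * grad m d f k v j)"
  using sum_idx_eq_sum_grad[of k m f v "\<lambda>_. 1"] by (simp add: multiform_def)

lemma grad_fun_upd_self: "grad m d f k (v(k := w)) = grad m d f k v"
  unfolding grad_def by (intro ext sum.cong refl prod.cong) auto

lemma grad_mono:
  assumes "\<forall>J\<in>idx m d. 0 \<le> f J"
    and "\<And>l j. l < m \<Longrightarrow> l \<noteq> k \<Longrightarrow> j < d l \<Longrightarrow> 0 \<le> u l j \<and> u l j \<le> v l j"
  shows "grad m d f k u j \<le> grad m d f k v j"
  unfolding grad_def using assms idx_less
  by (intro sum_mono mult_left_mono prod_mono) auto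

lemma grad_scale:
  "grad m d f k (\<lambda>l j. c l * v l j) j = (\<Prod>l\<in>{..<m} - {k}. c l) * grad m d f k v j"
  unfolding grad_def sum_distrib_left
  by (intro sum.cong refl) (simp add: prod.distrib algebra_simps)

lemma grad_pos_if_weakly_irreducible:
  assumes "weakly_irreducible m d f" "\<forall>J\<in>idx m d. 0 \<le> f J" "2 \<le> m" "\<forall>l<m. 1 \<le> d l"
    and "k < m" "j < d k" "\<And>l j. l < m \<Longrightarrow> l \<noteq> k \<Longrightarrow> j < d l \<Longrightarrow> 0 < v l j"
  shows "0 < grad m d f k v j"
proof -
  define k' where "k' = (if k = 0 then 1 else 0 :: nat)"
  have k': "k' < m" "k' \<noteq> k" using assms(3) by (auto simp: k'_def)
  have "0 < d k'" using assms(4) k' by (simp add: Suc_le_eq)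
  \<comment> \<open>\<open>(k, j)\<close> is joined to a vertex of another mode, so it has an edge: some \<open>f J > 0\<close> with \<open>J k = j\<close>.\<close>
  then have "((k, j), (k', 0)) \<in> (wi_edge m d f)\<^sup>*"
    using assms(1,5,6) k' unfolding weakly_irreducible_def by blast
  then obtain e where "((k, j), e) \<in> wi_edge m d f"
    using k' by (auto elim: converse_rtranclE)
  then obtain J where J: "J \<in> idx m d" "J k = j" "0 < f J"
    unfolding wi_edge_def by auto
  have "0 < f J * (\<Prod>l\<in>{..<m} - {k}. v l (J l))"
    using J assms(7) idx_less[OF J(1)] by (auto intro!: mult_pos_pos prod_pos)
  also have "\<dots> \<le> grad m d f k v j"
    unfolding grad_def using J assms(2) idx_less finite_idx less_imp_le[OF assms(7)]
    by (intro member_le_sum) (auto intro!: mult_nonneg_nonneg prod_nonneg)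
  finally show ?thesis .
qed

lemma multiform_scale:
  "multiform m d f (\<lambda>k j. c k * v k j) = (\<Prod>k<m. c k) * multiform m d f v"
  unfolding multiform_def sum_distrib_left
  by (intro sum.cong refl) (simp add: prod.distrib algebra_simps)

lemma abs_multiform_le:
  assumes "\<forall>J\<in>idx m d. 0 \<le> f J"
  shows "\<bar>multiform m d f v\<bar> \<le> multiform m d f (\<lambda>k j. \<bar>v k j\<bar>)"
  unfolding multiform_def
  by (rule order.trans[OF sum_abs]) (use assms in \<open>auto simp: abs_mult abs_prod intro!: sum_mono\<close>)

lemma psi_eq_powr: "0 < v j \<Longrightarrow> psi r v j = v j powr (r - 1)"
  by (simp add: psi_def)

section \<open>Elementary inequalities\<close>

lemma weighted_arith_geom_mean:
  fixes a \<theta> :: "'a \<Rightarrow> real"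
  assumes "finite S" "\<And>k. k \<in> S \<Longrightarrow> 0 \<le> \<theta> k" "\<And>k. k \<in> S \<Longrightarrow> 0 \<le> a k"
    and "(\<Sum>k\<in>S. \<theta> k) = 1"
  shows "(\<Prod>k\<in>S. a k powr \<theta> k) \<le> (\<Sum>k\<in>S. \<theta> k * a k)"
proof (cases "\<exists>k\<in>S. a k = 0")
  case True
  then have "(\<Prod>k\<in>S. a k powr \<theta> k) = 0" using assms(1) by (intro prod_zero) auto
  moreover have "0 \<le> (\<Sum>k\<in>S. \<theta> k * a k)" using assms by (simp add: sum_nonneg)
  ultimately show ?thesis by linarith
next
  case False
  then have pos: "\<And>k. k \<in> S \<Longrightarrow> 0 < a k" using assms(3) by force
  have "S \<noteq> {}" using assms(4) by auto
  have "exp (\<Sum>k\<in>S. \<theta> k *\<^sub>R ln (a k)) \<le> (\<Sum>k\<in>S. \<theta> k * exp (ln (a k)))"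
    using assms \<open>S \<noteq> {}\<close> by (intro convex_on_sum[OF _ _ exp_convex]) auto
  moreover have "exp (\<Sum>k\<in>S. \<theta> k *\<^sub>R ln (a k)) = (\<Prod>k\<in>S. a k powr \<theta> k)"
    using assms(1) pos by (simp add: exp_sum powr_def mult.commute less_imp_neq[symmetric] cong: prod.cong)
  ultimately show ?thesis using pos by simp
qed

lemma prod_le_weighted_sum_powr:
  fixes t \<theta> :: "'a \<Rightarrow> real"
  assumes "finite S" "\<And>k. k \<in> S \<Longrightarrow> 0 < \<theta> k" "\<And>k. k \<in> S \<Longrightarrow> 0 \<le> t k"
    and "(\<Sum>k\<in>S. \<theta> k) = 1"
  shows "(\<Prod>k\<in>S. t k) \<le> (\<Sum>k\<in>S. \<theta> k * t k powr (1 / \<theta> k))"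
proof -
  have "(\<Prod>k\<in>S. t k) = (\<Prod>k\<in>S. (t k powr (1 / \<theta> k)) powr \<theta> k)"
    using assms(2,3) by (intro prod.cong refl) (simp add: powr_powr less_imp_neq[symmetric])
  also have "\<dots> \<le> (\<Sum>k\<in>S. \<theta> k * t k powr (1 / \<theta> k))"
    using assms by (intro weighted_arith_geom_mean) (auto intro: less_imp_le)
  finally show ?thesis .
qed

lemma Young_powr:
  fixes w x s p :: real
  assumes "0 \<le> w" "0 < x" "0 < s" "s \<le> p"
  shows "w powr s * x powr (p - s) \<le> s / p * w powr p + (1 - s / p) * x powr p"
proof (cases "w = 0")
  case False
  then have "(w powr p) powr (s / p) * (x powr p) powr (1 - s / p) \<le> s / p * w powr p + (1 - s / p) * x powr p"
    using assms by (intro Youngs_inequality_0) auto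
  then show ?thesis using assms by (simp add: powr_powr algebra_simps)
qed (use assms in simp)

lemma mono_on_Min_commute:
  assumes "mono_on A g" "finite A" "A \<noteq> {}"
  shows "g (Min A) = Min (g ` A)"
  using assms by (intro Min_eqI[symmetric]) (auto intro!: mono_onD[OF assms(1)] Min_in)

lemma mono_on_Max_commute:
  assumes "mono_on A g" "finite A" "A \<noteq> {}"
  shows "g (Max A) = Max (g ` A)"
  using assms by (intro Max_eqI[symmetric]) (auto intro!: mono_onD[OF assms(1)] Max_in)

section \<open>Finite \<open>p\<close>-norms and the tensor norm\<close>

lemma pnorm_scale:
  assumes "0 < p" "0 \<le> c"
  shows "pnorm p n (\<lambda>j. c * v j) = c * pnorm p n v"
proof -
  have "(\<Sum>j<n. \<bar>c * v j\<bar> powr p) = c powr p * (\<Sum>j<n. \<bar>v j\<bar> powr p)"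
    using assms by (simp add: abs_mult powr_mult sum_distrib_left)
  then show ?thesis
    using assms by (simp add: pnorm_def powr_mult powr_powr sum_nonneg)
qed

lemma pnorm_mono:
  assumes "0 < p" "\<And>j. j < n \<Longrightarrow> \<bar>u j\<bar> \<le> \<bar>v j\<bar>"
  shows "pnorm p n u \<le> pnorm p n v"
  unfolding pnorm_def using assms by (intro powr_mono2 sum_mono sum_nonneg) auto

lemma abs_le_pnorm:
  assumes "0 < p" "j < n"
  shows "\<bar>v j\<bar> \<le> pnorm p n v"
proof -
  have "\<bar>v j\<bar> = (\<bar>v j\<bar> powr p) powr (1 / p)" using assms by (simp add: powr_powr)
  also have "\<dots> \<le> pnorm p n v"
    unfolding pnorm_def using assms by (intro powr_mono2 member_le_sum) auto
  finally show ?thesis .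
qed

lemma pnorm_pos:
  "0 < p \<Longrightarrow> j < n \<Longrightarrow> v j \<noteq> 0 \<Longrightarrow> 0 < pnorm p n v"
  using abs_le_pnorm[of p j n v] by linarith

lemma pnorm_eq_1_imp_sum:
  assumes "0 < p" "pnorm p n v = 1"
  shows "(\<Sum>j<n. \<bar>v j\<bar> powr p) = 1"
proof -
  have "(\<Sum>j<n. \<bar>v j\<bar> powr p) = pnorm p n v powr p"
    using assms(1) by (simp add: pnorm_def powr_powr sum_nonneg)
  then show ?thesis using assms(2) by simp
qed

lemma pnorm_normalize:
  "0 < p \<Longrightarrow> 0 < pnorm p n v \<Longrightarrow> pnorm p n (\<lambda>j. v j / pnorm p n v) = 1"
  using pnorm_scale[of p "1 / pnorm p n v" n v] by simp

lemma bdd_above_tnorm_quotients: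
  assumes "\<forall>k<m. 0 < p k"
  shows "bdd_above {\<bar>multiform m d f x\<bar> / (\<Prod>k<m. pnorm (p k) (d k) (x k)) | x.
                      \<forall>k<m. \<exists>j<d k. x k j \<noteq> 0}"
proof (rule bdd_aboveI, safe)
  fix x :: "nat \<Rightarrow> nat \<Rightarrow> real" assume x: "\<forall>k<m. \<exists>j<d k. x k j \<noteq> 0"
  have norms_pos: "0 < (\<Prod>k<m. pnorm (p k) (d k) (x k))"
    using x assms pnorm_pos by (intro prod_pos) blast
  have "\<bar>multiform m d f x\<bar> \<le> (\<Sum>J\<in>idx m d. \<bar>f J\<bar> * (\<Prod>k<m. \<bar>x k (J k)\<bar>))"
    unfolding multiform_def by (rule order.trans[OF sum_abs]) (simp add: abs_mult abs_prod)
  also have "\<dots> \<le> (\<Sum>J\<in>idx m d. \<bar>f J\<bar> * (\<Prod>k<m. pnorm (p k) (d k) (x k)))"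
    using assms idx_less abs_le_pnorm by (intro sum_mono mult_left_mono prod_mono) auto
  finally show "\<bar>multiform m d f x\<bar> / (\<Prod>k<m. pnorm (p k) (d k) (x k)) \<le> (\<Sum>J\<in>idx m d. \<bar>f J\<bar>)"
    using norms_pos by (simp add: divide_le_eq sum_distrib_right)
qed

lemma le_tnorm:
  assumes "\<forall>k<m. 0 < p k" "\<forall>k<m. \<exists>j<d k. x k j \<noteq> 0"
  shows "\<bar>multiform m d f x\<bar> / (\<Prod>k<m. pnorm (p k) (d k) (x k)) \<le> tnorm m d p f"
  unfolding tnorm_def using assms by (intro cSup_upper bdd_above_tnorm_quotients) auto

lemma tnorm_le:
  assumes "\<forall>k<m. 1 \<le> d k"
    and "\<And>x. \<forall>k<m. \<exists>j<d k. x k j \<noteq> 0 \<Longrightarrow>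
               \<bar>multiform m d f x\<bar> / (\<Prod>k<m. pnorm (p k) (d k) (x k)) \<le> M"
  shows "tnorm m d p f \<le> M"
  unfolding tnorm_def
proof (rule cSup_least)
  have "\<forall>k<m. \<exists>j<d k. (\<lambda>_ _. 1 :: real) k j \<noteq> 0"
    using assms(1) by (auto simp: Suc_le_eq)
  then show "{\<bar>multiform m d f x\<bar> / (\<Prod>k<m. pnorm (p k) (d k) (x k)) | x.
               \<forall>k<m. \<exists>j<d k. x k j \<noteq> 0} \<noteq> {}"
    by fast
next
  fix t assume "t \<in> {\<bar>multiform m d f x\<bar> / (\<Prod>k<m. pnorm (p k) (d k) (x k)) | x.
                       \<forall>k<m. \<exists>j<d k. x k j \<noteq> 0}"
  then obtain x where "t = \<bar>multiform m d f x\<bar> / (\<Prod>k<m. pnorm (p k) (d k) (x k))"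
    and "\<forall>k<m. \<exists>j<d k. x k j \<noteq> 0"
    by blast
  then show "t \<le> M" using assms(2) by simp
qed

section \<open>One step of the iteration\<close>

locale hgpm_setting =
  fixes m :: nat and d :: "nat \<Rightarrow> nat" and p :: "nat \<Rightarrow> real"
    and f :: "(nat \<Rightarrow> nat) \<Rightarrow> real" and i :: nat
  assumes two_le_m: "2 \<le> m"
    and d_ge_1: "\<forall>k<m. 1 \<le> d k"
    and f_nonneg: "\<forall>J\<in>idx m d. 0 \<le> f J"
    and f_weakly_irreducible: "weakly_irreducible m d f"
    and p_gt_1: "\<forall>k<m. 1 < p k"
    and i_less: "i < m"
    and p_ge: "\<forall>k<m. k \<noteq> i \<longrightarrow> (real m - 1) * hconj (p i) \<le> p k"
begin

abbreviation others :: "nat set" where "others \<equiv> {..<m} - {i}"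

definition q :: real where "q = hconj (p i)"
definition s :: real where "s = q * (real m - 1)"
definition lam_exp :: "nat \<Rightarrow> real" where "lam_exp l = (p l - 1) / s"

lemma p_gt_one: "l < m \<Longrightarrow> 1 < p l"
  using p_gt_1 by blast

lemma d_pos: "k < m \<Longrightarrow> 0 < d k"
  using d_ge_1 by (simp add: Suc_le_eq)

lemma q_gt_1: "1 < q"
  using p_gt_one[OF i_less] by (simp add: q_def hconj_def field_simps)

lemma q_minus_1_mult_p: "(q - 1) * p i = q"
  using p_gt_one[OF i_less] by (simp add: q_def hconj_def field_simps)

lemma inverse_p_plus_inverse_q: "1 / p i + 1 / q = 1"
  using p_gt_one[OF i_less] by (simp add: q_def hconj_def field_simps)

lemma s_pos: "0 < s"
  using q_gt_1 two_le_m by (simp add: s_def)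

lemma s_le_p: "l \<in> others \<Longrightarrow> s \<le> p l"
  using p_ge by (auto simp: s_def q_def algebra_simps)

lemma lam_exp_pos: "l \<in> others \<Longrightarrow> 0 < lam_exp l"
  using s_pos p_gt_one by (simp add: lam_exp_def)

lemma lam_exp_ge: "l \<in> others \<Longrightarrow> 1 - 1 / s \<le> lam_exp l"
  using s_le_p[of l] s_pos by (simp add: lam_exp_def field_simps)

lemma card_others_div_s: "real (card others) / s = 1 / q"
  using i_less two_le_m q_gt_1
  by (simp add: s_def card_Diff_singleton of_nat_diff field_simps)

definition positive :: "(nat \<Rightarrow> nat \<Rightarrow> real) \<Rightarrow> bool" where
  "positive x \<longleftrightarrow> (\<forall>l\<in>others. \<forall>j<d l. 0 < x l j)"

definition admissible :: "(nat \<Rightarrow> nat \<Rightarrow> real) \<Rightarrow> bool" where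
  "admissible x \<longleftrightarrow> positive x \<and> (\<forall>l\<in>others. pnorm (p l) (d l) (x l) = 1)"

text \<open>\<open>Z x l\<close> is \<open>s\<^sub>i\<^sub>,\<^sub>l(x)\<close>, and \<open>G\<close>, \<open>Y\<close>, \<open>lift\<close>, \<open>H\<close> name the stages of its computation;
  \<open>lift x\<close> is the point \<open>\<xi>\<close> above.\<close>

definition G :: "(nat \<Rightarrow> nat \<Rightarrow> real) \<Rightarrow> nat \<Rightarrow> real" where
  "G x = grad m d f i x"

definition Y :: "(nat \<Rightarrow> nat \<Rightarrow> real) \<Rightarrow> nat \<Rightarrow> real" where
  "Y x = psi q (G x)"

definition lift :: "(nat \<Rightarrow> nat \<Rightarrow> real) \<Rightarrow> nat \<Rightarrow> nat \<Rightarrow> real" where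
  "lift x = x(i := Y x)"

definition H :: "(nat \<Rightarrow> nat \<Rightarrow> real) \<Rightarrow> nat \<Rightarrow> nat \<Rightarrow> real" where
  "H x l = grad m d f l (lift x)"

abbreviation Z :: "(nat \<Rightarrow> nat \<Rightarrow> real) \<Rightarrow> nat \<Rightarrow> nat \<Rightarrow> real" where
  "Z \<equiv> hgpm_z m d p f i"

lemma G_pos: "positive x \<Longrightarrow> j < d i \<Longrightarrow> 0 < G x j"
  unfolding G_def positive_def
  using f_weakly_irreducible f_nonneg two_le_m d_ge_1 i_less
  by (intro grad_pos_if_weakly_irreducible) auto

lemma Y_eq: "positive x \<Longrightarrow> j < d i \<Longrightarrow> Y x j = G x j powr (q - 1)"
  using G_pos by (simp add: Y_def psi_eq_powr)

lemma Y_pos: "positive x \<Longrightarrow> j < d i \<Longrightarrow> 0 < Y x j"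
  using G_pos[of x j] Y_eq[of x j] by simp

lemma Y_mult_G: "positive x \<Longrightarrow> j < d i \<Longrightarrow> Y x j * G x j = G x j powr q"
  using Y_eq G_pos by (simp add: powr_mult_base less_imp_le mult.commute)

lemma Y_powr_p: "positive x \<Longrightarrow> j < d i \<Longrightarrow> Y x j powr p i = G x j powr q"
  using Y_eq G_pos q_minus_1_mult_p by (simp add: powr_powr)

lemma lift_pos: "positive x \<Longrightarrow> k < m \<Longrightarrow> j < d k \<Longrightarrow> 0 < lift x k j"
  using Y_pos by (auto simp: lift_def positive_def)

lemma H_pos: "positive x \<Longrightarrow> l < m \<Longrightarrow> j < d l \<Longrightarrow> 0 < H x l j"
  unfolding H_def using f_weakly_irreducible f_nonneg two_le_m d_ge_1 lift_pos
  by (intro grad_pos_if_weakly_irreducible) auto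

lemma Z_eq:
  assumes "positive x" "l \<in> others" "j < d l"
  shows "Z x l j = H x l j powr (1 / (p l - 1))"
proof -
  have "1 < p l" using p_gt_one assms(2) by simp
  then have "hconj (p l) - 1 = 1 / (p l - 1)" by (simp add: hconj_def field_simps)
  then show ?thesis
    using assms H_pos[of x l j]
    by (simp add: hgpm_z_def H_def lift_def Y_def G_def q_def psi_eq_powr)
qed

lemma Z_pos: "positive x \<Longrightarrow> l \<in> others \<Longrightarrow> j < d l \<Longrightarrow> 0 < Z x l j"
  using Z_eq[of x l j] H_pos[of x l j] by simp

lemma H_eq: "positive x \<Longrightarrow> l \<in> others \<Longrightarrow> j < d l \<Longrightarrow> H x l j = Z x l j powr (p l - 1)"
  using Z_eq[of x l j] H_pos[of x l j] p_gt_one[of l] by (simp add: powr_powr)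

lemma positive_mono:
  "positive u \<Longrightarrow> \<forall>l\<in>others. \<forall>j<d l. u l j \<le> v l j \<Longrightarrow> positive v"
  unfolding positive_def by (meson order_less_le_trans)

lemma lift_mono:
  assumes "positive u" "\<forall>l\<in>others. \<forall>j<d l. u l j \<le> v l j" "k < m" "j < d k"
  shows "lift u k j \<le> lift v k j"
proof (cases "k = i")
  case True
  have "G u j \<le> G v j"
    unfolding G_def using f_nonneg assms(1,2)
    by (intro grad_mono) (auto simp: positive_def less_imp_le)
  then have "G u j powr (q - 1) \<le> G v j powr (q - 1)"
    using True assms G_pos[of u j] q_gt_1 by (intro powr_mono2) auto
  then show ?thesis
    using True assms Y_eq[of u j] Y_eq[of v j] positive_mono[OF assms(1,2)] by (simp add: lift_def)
next
  case False
  then show ?thesis using assms by (simp add: lift_def)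
qed

lemma Z_mono:
  assumes "positive u" "\<forall>l\<in>others. \<forall>j<d l. u l j \<le> v l j" "l \<in> others" "j < d l"
  shows "Z u l j \<le> Z v l j"
proof -
  have "H u l j \<le> H v l j"
    unfolding H_def using f_nonneg assms lift_pos[OF assms(1)]
    by (intro grad_mono) (auto intro: less_imp_le lift_mono)
  moreover have "0 \<le> H u l j" "0 \<le> 1 / (p l - 1)"
    using H_pos[OF assms(1), of l j] p_gt_one[of l] assms(3,4) by auto
  ultimately show ?thesis
    using Z_eq[OF assms(1,3,4)] Z_eq[OF positive_mono[OF assms(1,2)] assms(3,4)]
    by (simp add: powr_mono2)
qed

text \<open>Scaling block \<open>k \<noteq> i\<close> of \<open>x\<close> by \<open>c k\<close> scales \<open>G x\<close> by \<open>C = \<Prod>c\<close>, hence \<open>Y x\<close> by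
  \<open>C\<^sup>q\<^sup>-\<^sup>1\<close>, hence \<open>H x l\<close> by \<open>C\<^sup>q\<^sup>-\<^sup>1 \<cdot> C / c l\<close>, and \<open>Z x l\<close> by its power \<open>1/(p l - 1)\<close>.\<close>

definition scale_factor :: "(nat \<Rightarrow> real) \<Rightarrow> nat \<Rightarrow> real" where
  "scale_factor c l = ((\<Prod>k\<in>others. c k) powr q / c l) powr (1 / (p l - 1))"

lemma Z_scale:
  assumes "positive x" "\<forall>l\<in>others. 0 < c l" "l \<in> others" "j < d l"
  shows "Z (\<lambda>k j. c k * x k j) l j = scale_factor c l * Z x l j"
proof -
  define C where "C = (\<Prod>k\<in>others. c k)"
  define c' where "c' = c(i := C powr (q - 1))"
  have "0 < C" unfolding C_def using assms(2) by (intro prod_pos) auto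
  have cx_pos: "positive (\<lambda>k j. c k * x k j)"
    using assms(1,2) by (simp add: positive_def)
  have "G (\<lambda>k j. c k * x k j) = (\<lambda>j. C * G x j)"
    by (rule ext) (simp add: G_def C_def grad_scale)
  then have "Y (\<lambda>k j. c k * x k j) = (\<lambda>j. C powr (q - 1) * Y x j)"
    using \<open>0 < C\<close> by (simp add: Y_def psi_def fun_eq_iff abs_mult powr_mult sgn_mult)
  then have lift_cx: "lift (\<lambda>k j. c k * x k j) = (\<lambda>k j. c' k * lift x k j)"
    by (auto simp: lift_def c'_def)
  have "{..<m} - {l} = insert i (others - {l})"
    using assms(3) i_less by auto
  then have "(\<Prod>k\<in>{..<m} - {l}. c' k) = C powr (q - 1) * (\<Prod>k\<in>others - {l}. c' k)"
    by (simp add: c'_def)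
  also have "(\<Prod>k\<in>others - {l}. c' k) = (\<Prod>k\<in>others - {l}. c k)"
    by (intro prod.cong) (auto simp: c'_def)
  also have "(\<Prod>k\<in>others - {l}. c k) = C / c l"
    using assms(2,3) by (simp add: C_def prod.remove[of others l] less_imp_neq[symmetric])
  also have "C powr (q - 1) * (C / c l) = C powr q / c l"
    using \<open>0 < C\<close> by (simp add: powr_diff)
  finally have H_cx: "H (\<lambda>k j. c k * x k j) l j = C powr q / c l * H x l j"
    by (simp add: H_def lift_cx grad_scale)
  then show ?thesis
    unfolding Z_eq[OF cx_pos assms(3,4)] Z_eq[OF assms(1,3,4)] H_cx scale_factor_def C_def[symmetric]
    by (simp only: powr_mult)
qed

definition ratio_min :: "(nat \<Rightarrow> nat \<Rightarrow> real) \<Rightarrow> nat \<Rightarrow> real" where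
  "ratio_min x l = Min ((\<lambda>j. Z x l j / x l j) ` {..<d l})"

definition ratio_max :: "(nat \<Rightarrow> nat \<Rightarrow> real) \<Rightarrow> nat \<Rightarrow> real" where
  "ratio_max x l = Max ((\<lambda>j. Z x l j / x l j) ` {..<d l})"

definition Lam :: "(nat \<Rightarrow> real) \<Rightarrow> real" where
  "Lam r = (\<Prod>l\<in>others. r l powr lam_exp l)"

lemma ratio_pos: "positive x \<Longrightarrow> l \<in> others \<Longrightarrow> j < d l \<Longrightarrow> 0 < Z x l j / x l j"
  using Z_pos by (simp add: positive_def)

lemma ratio_min_le:
  assumes "positive x" "l \<in> others" "j < d l"
  shows "ratio_min x l * x l j \<le> Z x l j"
proof -
  have "ratio_min x l \<le> Z x l j / x l j"
    unfolding ratio_min_def using assms(3) by (intro Min_le) auto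
  then show ?thesis using assms by (simp add: positive_def le_divide_eq)
qed

lemma ratio_max_ge:
  assumes "positive x" "l \<in> others" "j < d l"
  shows "Z x l j \<le> ratio_max x l * x l j"
proof -
  have "Z x l j / x l j \<le> ratio_max x l"
    unfolding ratio_max_def using assms(3) by (intro Max_ge) auto
  then show ?thesis using assms by (simp add: positive_def divide_le_eq)
qed

lemma ratio_min_pos: "positive x \<Longrightarrow> l \<in> others \<Longrightarrow> 0 < ratio_min x l"
  unfolding ratio_min_def using ratio_pos d_pos[of l] by (subst Min_gr_iff) auto

lemma ratio_max_pos: "positive x \<Longrightarrow> l \<in> others \<Longrightarrow> 0 < ratio_max x l"
  unfolding ratio_max_def using ratio_pos d_pos[of l] by (subst Max_gr_iff) auto

lemma Lam_mono: "\<forall>l\<in>others. 0 \<le> r l \<and> r l \<le> r' l \<Longrightarrow> Lam r \<le> Lam r'"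
  unfolding Lam_def using lam_exp_pos by (intro prod_mono) (auto intro: powr_mono2 less_imp_le)

lemma Min_ratio_powr:
  assumes "positive x" "l \<in> others"
  shows "Min ((\<lambda>j. (Z x l j / x l j) powr lam_exp l) ` {..<d l}) = ratio_min x l powr lam_exp l"
proof -
  have "mono_on ((\<lambda>j. Z x l j / x l j) ` {..<d l}) (\<lambda>t. t powr lam_exp l)"
    using ratio_pos[OF assms] lam_exp_pos[OF assms(2)]
    by (auto intro!: mono_onI powr_mono2 simp: order_less_imp_le)
  then show ?thesis
    unfolding ratio_min_def using assms d_pos
    by (subst mono_on_Min_commute) (auto simp: image_image)
qed

lemma Max_ratio_powr:
  assumes "positive x" "l \<in> others"
  shows "Max ((\<lambda>j. (Z x l j / x l j) powr lam_exp l) ` {..<d l}) = ratio_max x l powr lam_exp l"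
proof -
  have "mono_on ((\<lambda>j. Z x l j / x l j) ` {..<d l}) (\<lambda>t. t powr lam_exp l)"
    using ratio_pos[OF assms] lam_exp_pos[OF assms(2)]
    by (auto intro!: mono_onI powr_mono2 simp: order_less_imp_le)
  then show ?thesis
    unfolding ratio_max_def using assms d_pos
    by (subst mono_on_Max_commute) (auto simp: image_image)
qed

abbreviation step :: "(nat \<Rightarrow> nat \<Rightarrow> real) \<Rightarrow> nat \<Rightarrow> nat \<Rightarrow> real" where
  "step \<equiv> hgpm_next m d p f i"

definition Znorm :: "(nat \<Rightarrow> nat \<Rightarrow> real) \<Rightarrow> nat \<Rightarrow> real" where
  "Znorm x l = pnorm (p l) (d l) (Z x l)"

lemma step_eq: "l \<noteq> i \<Longrightarrow> step x l j = Z x l j / Znorm x l"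
  by (simp add: hgpm_next_def Znorm_def Let_def)

lemma Znorm_pos:
  assumes "positive x" "l \<in> others"
  shows "0 < Znorm x l"
proof -
  have "0 < p l" "0 < d l" using assms(2) p_gt_one[of l] d_pos[of l] by auto
  then show ?thesis
    unfolding Znorm_def using Z_pos[OF assms, of 0] by (intro pnorm_pos) auto
qed

lemma admissible_step:
  assumes "admissible x"
  shows "admissible (step x)"
proof -
  have x: "positive x" using assms by (simp add: admissible_def)
  have "0 < step x l j" if "l \<in> others" "j < d l" for l j
    using that Z_pos[OF x] Znorm_pos[OF x] by (simp add: step_eq)
  moreover have "pnorm (p l) (d l) (step x l) = 1" if l: "l \<in> others" for l
  proof -
    have "step x l = (\<lambda>j. Z x l j / Znorm x l)" using l by (simp add: step_eq fun_eq_iff)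
    then show ?thesis
      using l p_gt_one[of l] Znorm_pos[OF x l] by (simp add: pnorm_normalize Znorm_def)
  qed
  ultimately show ?thesis by (simp add: admissible_def positive_def)
qed

lemma ratio_min_le_Znorm:
  assumes "admissible x" "l \<in> others"
  shows "ratio_min x l \<le> Znorm x l"
proof -
  have x: "positive x" and "pnorm (p l) (d l) (x l) = 1" "0 < p l"
    using assms p_gt_one[of l] by (auto simp: admissible_def)
  then have "ratio_min x l = pnorm (p l) (d l) (\<lambda>j. ratio_min x l * x l j)"
    using ratio_min_pos[OF x assms(2)] by (simp add: pnorm_scale)
  also have "\<dots> \<le> Znorm x l"
    unfolding Znorm_def
  proof (rule pnorm_mono[OF \<open>0 < p l\<close>])
    fix j assume "j < d l"
    then have "0 < ratio_min x l * x l j" "ratio_min x l * x l j \<le> Z x l j"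
      using x assms(2) ratio_min_pos[OF x assms(2)] ratio_min_le[OF x assms(2)]
      by (auto simp: positive_def)
    then show "\<bar>ratio_min x l * x l j\<bar> \<le> \<bar>Z x l j\<bar>" by simp
  qed
  finally show ?thesis .
qed

lemma Znorm_le_ratio_max:
  assumes "admissible x" "l \<in> others"
  shows "Znorm x l \<le> ratio_max x l"
proof -
  have x: "positive x" and "pnorm (p l) (d l) (x l) = 1" "0 < p l"
    using assms p_gt_one[of l] by (auto simp: admissible_def)
  have "Znorm x l \<le> pnorm (p l) (d l) (\<lambda>j. ratio_max x l * x l j)"
    unfolding Znorm_def
  proof (rule pnorm_mono[OF \<open>0 < p l\<close>])
    fix j assume "j < d l"
    then have "0 < Z x l j" "Z x l j \<le> ratio_max x l * x l j"
      using Z_pos[OF x assms(2)] ratio_max_ge[OF x assms(2)] by auto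
    then show "\<bar>Z x l j\<bar> \<le> \<bar>ratio_max x l * x l j\<bar>" by simp
  qed
  also have "\<dots> = ratio_max x l"
    using ratio_max_pos[OF x assms(2)] \<open>0 < p l\<close> \<open>pnorm (p l) (d l) (x l) = 1\<close>
    by (simp add: pnorm_scale)
  finally show ?thesis .
qed

subsection \<open>The lower bound\<close>

lemma multiform_lift_eq_sum_G:
  assumes "positive x"
  shows "multiform m d f (lift x) = (\<Sum>j<d i. G x j powr q)"
proof -
  have "multiform m d f (lift x) = (\<Sum>j<d i. Y x j * G x j)"
    using multiform_eq_sum_grad[OF i_less, of d f "lift x"]
    by (simp add: lift_def G_def grad_fun_upd_self)
  also have "\<dots> = (\<Sum>j<d i. G x j powr q)"
    using Y_mult_G[OF assms] by simp
  finally show ?thesis .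
qed

lemma multiform_lift_eq_sum_H:
  "l \<in> others \<Longrightarrow> multiform m d f (lift x) = (\<Sum>j<d l. x l j * H x l j)"
  using multiform_eq_sum_grad[of l m d f "lift x"] by (simp add: H_def lift_def)

lemma multiform_lift_pos:
  assumes "positive x"
  shows "0 < multiform m d f (lift x)"
  unfolding multiform_lift_eq_sum_G[OF assms] using G_pos[OF assms] d_pos[OF i_less]
  by (intro sum_pos) force+

lemma admissible_sum_powr:
  assumes "admissible x" "l \<in> others"
  shows "(\<Sum>j<d l. x l j powr p l) = 1"
proof -
  have "(\<Sum>j<d l. x l j powr p l) = (\<Sum>j<d l. \<bar>x l j\<bar> powr p l)"
    using assms by (intro sum.cong refl) (simp add: admissible_def positive_def abs_of_pos)
  also have "\<dots> = 1"
    using assms p_gt_one[of l] by (intro pnorm_eq_1_imp_sum) (auto simp: admissible_def)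
  finally show ?thesis .
qed

lemma ratio_min_powr_le_multiform_lift:
  assumes "admissible x" "l \<in> others"
  shows "ratio_min x l powr (p l - 1) \<le> multiform m d f (lift x)"
proof -
  have x: "positive x" using assms(1) by (simp add: admissible_def)
  have "1 < p l" using assms(2) p_gt_one by simp
  have x_pos: "0 < x l j" if "j < d l" for j
    using x assms(2) that by (simp add: positive_def)
  note sum_x = admissible_sum_powr[OF assms]
  have "ratio_min x l powr (p l - 1) * x l j powr p l \<le> x l j * H x l j" if j: "j < d l" for j
  proof -
    have "0 < x l j" using x_pos[OF j] .
    have "(ratio_min x l * x l j) powr (p l - 1) \<le> Z x l j powr (p l - 1)"
      using ratio_min_le[OF x assms(2) j] ratio_min_pos[OF x assms(2)] \<open>0 < x l j\<close> \<open>1 < p l\<close>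
      by (intro powr_mono2) auto
    then have "x l j * (ratio_min x l * x l j) powr (p l - 1) \<le> x l j * H x l j"
      using H_eq[OF x assms(2) j] \<open>0 < x l j\<close> by simp
    moreover have "x l j * (ratio_min x l * x l j) powr (p l - 1)
        = ratio_min x l powr (p l - 1) * x l j powr p l"
      using \<open>0 < x l j\<close> by (simp add: powr_mult powr_mult_base mult.left_commute)
    ultimately show ?thesis by linarith
  qed
  then have "ratio_min x l powr (p l - 1) * (\<Sum>j<d l. x l j powr p l) \<le> (\<Sum>j<d l. x l j * H x l j)"
    unfolding sum_distrib_left by (intro sum_mono) auto
  then show ?thesis using sum_x multiform_lift_eq_sum_H[OF assms(2)] by simp
qed

lemma multiform_lift_powr_le_tnorm:
  assumes "admissible x"
  shows "multiform m d f (lift x) powr (1 / q) \<le> tnorm m d p f"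
proof -
  define P where "P = multiform m d f (lift x)"
  have x: "positive x" using assms by (simp add: admissible_def)
  have "0 < P" unfolding P_def using multiform_lift_pos[OF x] .
  have "pnorm (p i) (d i) (Y x) = P powr (1 / p i)"
  proof -
    have "\<bar>Y x j\<bar> powr p i = G x j powr q" if "j < d i" for j
      using Y_pos[OF x that] Y_powr_p[OF x that] by simp
    then show ?thesis
      unfolding pnorm_def P_def multiform_lift_eq_sum_G[OF x] by simp
  qed
  moreover have "(\<Prod>k<m. pnorm (p k) (d k) (lift x k))
      = pnorm (p i) (d i) (Y x) * (\<Prod>k\<in>others. pnorm (p k) (d k) (lift x k))"
    using i_less by (simp add: prod.remove[of "{..<m}" i] lift_def)
  moreover have "(\<Prod>k\<in>others. pnorm (p k) (d k) (lift x k)) = 1"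
    using assms by (simp add: admissible_def lift_def)
  ultimately have norms: "(\<Prod>k<m. pnorm (p k) (d k) (lift x k)) = P powr (1 / p i)"
    by simp
  have "1 / q = 1 - 1 / p i" using inverse_p_plus_inverse_q by linarith
  then have "P powr (1 / q) = P / P powr (1 / p i)"
    using \<open>0 < P\<close> by (simp add: powr_diff)
  also have "\<dots> = \<bar>multiform m d f (lift x)\<bar> / (\<Prod>k<m. pnorm (p k) (d k) (lift x k))"
    using \<open>0 < P\<close> norms by (simp add: P_def)
  also have "\<dots> \<le> tnorm m d p f"
  proof (rule le_tnorm)
    show "\<forall>k<m. 0 < p k" using p_gt_1 by auto
    show "\<forall>k<m. \<exists>j<d k. lift x k j \<noteq> 0"
      using lift_pos[OF x] d_pos by (metis less_irrefl)
  qed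
  finally show ?thesis unfolding P_def .
qed

lemma Lam_ratio_min_le_tnorm:
  assumes "admissible x"
  shows "Lam (ratio_min x) \<le> tnorm m d p f"
proof -
  define P where "P = multiform m d f (lift x)"
  have x: "positive x" using assms by (simp add: admissible_def)
  have "Lam (ratio_min x) = (\<Prod>l\<in>others. (ratio_min x l powr (p l - 1)) powr (1 / s))"
    unfolding Lam_def lam_exp_def by (simp add: powr_powr)
  also have "\<dots> \<le> (\<Prod>l\<in>others. P powr (1 / s))"
    unfolding P_def using ratio_min_powr_le_multiform_lift[OF assms] s_pos
    by (intro prod_mono) (auto intro: powr_mono2)
  also have "\<dots> = P powr (\<Sum>l\<in>others. 1 / s)"
    by (rule powr_sum[symmetric]) (use multiform_lift_pos[OF x] in \<open>simp add: P_def\<close>)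
  also have "(\<Sum>l\<in>others. 1 / s) = 1 / q"
    using card_others_div_s by simp
  also have "P powr (1 / q) \<le> tnorm m d p f"
    unfolding P_def by (rule multiform_lift_powr_le_tnorm[OF assms])
  finally show ?thesis .
qed

subsection \<open>The upper bound\<close>

definition weight :: "(nat \<Rightarrow> nat \<Rightarrow> real) \<Rightarrow> (nat \<Rightarrow> nat) \<Rightarrow> real" where
  "weight x J = f J * (\<Prod>k<m. lift x k (J k))"

lemma weight_nonneg: "positive x \<Longrightarrow> J \<in> idx m d \<Longrightarrow> 0 \<le> weight x J"
  unfolding weight_def using f_nonneg lift_pos idx_less
  by (intro mult_nonneg_nonneg prod_nonneg) (auto intro: less_imp_le)

lemma sum_weight_eq_sum_grad:
  "k < m \<Longrightarrow> (\<Sum>J\<in>idx m d. weight x J * \<phi> (J k))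
            = (\<Sum>j<d k. lift x k j * grad m d f k (lift x) j * \<phi> j)"
  unfolding weight_def by (rule sum_idx_eq_sum_grad)

lemma sum_weight_mode_i:
  assumes "positive x" "\<forall>j<d i. 0 \<le> w j" "(\<Sum>j<d i. w j powr p i) = 1"
  shows "(\<Sum>J\<in>idx m d. weight x J * (w (J i) / Y x (J i)) powr p i) = 1"
proof -
  have "(\<Sum>J\<in>idx m d. weight x J * (w (J i) / Y x (J i)) powr p i)
      = (\<Sum>j<d i. Y x j * G x j * (w j / Y x j) powr p i)"
    using sum_weight_eq_sum_grad[OF i_less]
    by (simp add: lift_def G_def grad_fun_upd_self)
  also have "\<dots> = (\<Sum>j<d i. w j powr p i)"
  proof (intro sum.cong refl)
    fix j assume "j \<in> {..<d i}"
    then have "j < d i" by simp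
    then have "0 < G x j powr q" using G_pos[OF assms(1) \<open>j < d i\<close>] by simp
    then show "Y x j * G x j * (w j / Y x j) powr p i = w j powr p i"
      using Y_mult_G[OF assms(1) \<open>j < d i\<close>] Y_powr_p[OF assms(1) \<open>j < d i\<close>]
      by (simp add: powr_divide)
  qed
  finally show ?thesis using assms(3) by simp
qed

lemma sum_weight_mode_other:
  assumes "admissible x" "l \<in> others" "\<forall>j<d l. 0 \<le> w j" "(\<Sum>j<d l. w j powr p l) = 1"
  shows "(\<Sum>J\<in>idx m d. weight x J * (w (J l) / (ratio_max x l powr lam_exp l * x l (J l))) powr s) \<le> 1"
proof -
  define R where "R = ratio_max x l"
  have x: "positive x" using assms(1) by (simp add: admissible_def)
  have "0 < R" "s \<le> p l" "1 < p l"
    using ratio_max_pos[OF x assms(2)] s_le_p[OF assms(2)] p_gt_one assms(2) by (auto simp: R_def)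
  have x_pos: "0 < x l j" if "j < d l" for j
    using x assms(2) that by (simp add: positive_def)
  have summand_le: "x l j * H x l j * (w j / (R powr lam_exp l * x l j)) powr s
      \<le> s / p l * w j powr p l + (1 - s / p l) * x l j powr p l" if j: "j < d l" for j
  proof -
    have H_le: "H x l j \<le> R powr (p l - 1) * x l j powr (p l - 1)"
      using H_eq[OF x assms(2) j] ratio_max_ge[OF x assms(2) j] Z_pos[OF x assms(2) j] \<open>1 < p l\<close>
      by (simp add: R_def powr_mono2 flip: powr_mult)
    have powr_eq: "(w j / (R powr lam_exp l * x l j)) powr s
        = w j powr s / (R powr (p l - 1) * x l j powr s)"
      using s_pos by (simp add: powr_divide powr_mult powr_powr lam_exp_def)
    have "x l j * H x l j * (w j / (R powr lam_exp l * x l j)) powr s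
        \<le> x l j * (R powr (p l - 1) * x l j powr (p l - 1)) * (w j powr s / (R powr (p l - 1) * x l j powr s))"
      unfolding powr_eq using H_le x_pos[OF j] by (intro mult_right_mono mult_left_mono) auto
    also have "\<dots> = w j powr s * x l j powr (p l - s)"
      using x_pos[OF j] \<open>0 < R\<close> by (simp add: powr_diff powr_mult_base field_simps)
    also have "\<dots> \<le> s / p l * w j powr p l + (1 - s / p l) * x l j powr p l"
      using assms(3) j x_pos[OF j] s_pos \<open>s \<le> p l\<close> by (intro Young_powr) auto
    finally show ?thesis .
  qed
  have "(\<Sum>J\<in>idx m d. weight x J * (w (J l) / (R powr lam_exp l * x l (J l))) powr s)
      = (\<Sum>j<d l. x l j * H x l j * (w j / (R powr lam_exp l * x l j)) powr s)"
    using assms(2) sum_weight_eq_sum_grad[of l x] by (simp add: lift_def H_def)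
  also have "\<dots> \<le> (\<Sum>j<d l. s / p l * w j powr p l + (1 - s / p l) * x l j powr p l)"
    using summand_le by (intro sum_mono) auto
  also have "\<dots> = s / p l * (\<Sum>j<d l. w j powr p l) + (1 - s / p l) * (\<Sum>j<d l. x l j powr p l)"
    by (simp only: sum.distrib sum_distrib_left)
  also have "\<dots> = 1"
    using assms(4) admissible_sum_powr[OF assms(1,2)] by simp
  finally show ?thesis unfolding R_def .
qed

lemma prod_lam_factors: "(\<Prod>k<m. if k = i then 1 else r k powr lam_exp k) = Lam r"
proof -
  have "(\<Prod>k<m. if k = i then 1 else r k powr lam_exp k)
      = (\<Prod>k\<in>others. if k = i then 1 else r k powr lam_exp k)"
    using i_less by (simp add: prod.remove[of "{..<m}" i])
  also have "\<dots> = Lam r" unfolding Lam_def by (intro prod.cong) auto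
  finally show ?thesis .
qed

lemma weight_factorization:
  assumes "positive x" "J \<in> idx m d" "\<forall>l\<in>others. 0 < r l"
  shows "f J * (\<Prod>k<m. w k (J k)) = Lam r * (weight x J *
           (\<Prod>k<m. w k (J k) / ((if k = i then 1 else r k powr lam_exp k) * lift x k (J k))))"
proof -
  define \<rho> where "\<rho> k = (if k = i then 1 else r k powr lam_exp k)" for k
  have "(\<Prod>k<m. lift x k (J k)) \<noteq> 0"
    using lift_pos[OF assms(1)] idx_less[OF assms(2)] by (simp add: less_imp_neq[symmetric])
  moreover have "(\<Prod>k<m. \<rho> k) = Lam r"
    unfolding \<rho>_def by (rule prod_lam_factors)
  moreover have "0 < (\<Prod>k<m. \<rho> k)"
  proof (rule prod_pos)
    fix k assume "k \<in> {..<m}"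
    then show "0 < \<rho> k" using bspec[OF assms(3), of k] by (auto simp: \<rho>_def)
  qed
  ultimately show ?thesis
    by (simp add: weight_def \<rho>_def[symmetric] prod_dividef prod.distrib)
qed

lemma Lam_nonneg: "0 \<le> Lam r"
  by (simp add: Lam_def prod_nonneg)

lemma sum_conj_exponents: "(\<Sum>k<m. if k = i then 1 / p i else 1 / s) = 1"
proof -
  have "(\<Sum>k<m. if k = i then 1 / p i else 1 / s)
      = 1 / p i + (\<Sum>k\<in>others. if k = i then 1 / p i else 1 / s)"
    using i_less by (simp add: sum.remove[of "{..<m}" i])
  also have "(\<Sum>k\<in>others. if k = i then 1 / p i else 1 / s) = (\<Sum>k\<in>others. 1 / s)"
    by (intro sum.cong) auto
  also have "\<dots> = 1 / q"
    using card_others_div_s by simp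
  finally show ?thesis using inverse_p_plus_inverse_q by simp
qed

lemma multiform_le_Lam_ratio_max:
  assumes "admissible x" "\<And>k j. k < m \<Longrightarrow> j < d k \<Longrightarrow> 0 \<le> w k j"
    and "\<And>k. k < m \<Longrightarrow> (\<Sum>j<d k. w k j powr p k) = 1"
  shows "multiform m d f w \<le> Lam (ratio_max x)"
proof -
  define \<rho> where "\<rho> k = (if k = i then 1 else ratio_max x k powr lam_exp k)" for k
  define \<theta> where "\<theta> k = (if k = i then 1 / p i else 1 / s)" for k
  define t where "t J k = w k (J k) / (\<rho> k * lift x k (J k))" for J k
  have x: "positive x" using assms(1) by (simp add: admissible_def)
  have \<rho>_pos: "0 < \<rho> k" if "k < m" for k
    using that ratio_max_pos[OF x, of k] by (auto simp: \<rho>_def)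
  have \<theta>_pos: "0 < \<theta> k" for k
    using p_gt_one[OF i_less] s_pos by (simp add: \<theta>_def)
  have t_nonneg: "0 \<le> t J k" if "J \<in> idx m d" "k < m" for J k
    using that assms(2) idx_less \<rho>_pos lift_pos[OF x] by (simp add: t_def less_imp_le)
  have factor: "f J * (\<Prod>k<m. w k (J k)) = Lam (ratio_max x) * (weight x J * (\<Prod>k<m. t J k))"
    if "J \<in> idx m d" for J
    using weight_factorization[OF x that] ratio_max_pos[OF x] by (simp add: t_def \<rho>_def)
  have modes: "(\<Sum>J\<in>idx m d. weight x J * t J k powr (1 / \<theta> k)) \<le> 1" if k: "k < m" for k
  proof (cases "k = i")
    case True
    then show ?thesis
      using sum_weight_mode_i[OF x, of "w i"] assms(2,3) i_less
      by (simp add: t_def \<rho>_def \<theta>_def lift_def)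
  next
    case False
    then show ?thesis
      using sum_weight_mode_other[OF assms(1), of k "w k"] assms(2,3) k
      by (simp add: t_def \<rho>_def \<theta>_def lift_def)
  qed
  have "multiform m d f w = (\<Sum>J\<in>idx m d. Lam (ratio_max x) * (weight x J * (\<Prod>k<m. t J k)))"
    unfolding multiform_def using factor by simp
  also have "\<dots> \<le> (\<Sum>J\<in>idx m d. Lam (ratio_max x) *
                        (weight x J * (\<Sum>k<m. \<theta> k * t J k powr (1 / \<theta> k))))"
    using Lam_nonneg weight_nonneg[OF x] t_nonneg \<theta>_pos sum_conj_exponents
    by (intro sum_mono mult_left_mono prod_le_weighted_sum_powr) (auto simp: \<theta>_def)
  also have "\<dots> = Lam (ratio_max x) * (\<Sum>k<m. \<theta> k * (\<Sum>J\<in>idx m d. weight x J * t J k powr (1 / \<theta> k)))"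
    by (simp add: sum_distrib_left sum.swap[of _ "idx m d"] mult.left_commute)
  also have "\<dots> \<le> Lam (ratio_max x) * (\<Sum>k<m. \<theta> k)"
    using Lam_nonneg modes \<theta>_pos by (intro mult_left_mono sum_mono) (auto intro: mult_left_le less_imp_le)
  also have "\<dots> = Lam (ratio_max x)"
    using sum_conj_exponents by (simp add: \<theta>_def)
  finally show ?thesis .
qed

lemma tnorm_le_Lam_ratio_max:
  assumes "admissible x"
  shows "tnorm m d p f \<le> Lam (ratio_max x)"
proof (rule tnorm_le[OF d_ge_1])
  fix u :: "nat \<Rightarrow> nat \<Rightarrow> real"
  assume u: "\<forall>k<m. \<exists>j<d k. u k j \<noteq> 0"
  define n where "n k = (if k < m then pnorm (p k) (d k) (u k) else 1)" for k
  define w where "w k j = \<bar>u k j\<bar> / n k" for k j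
  have n_pos: "0 < n k" for k
    using u p_gt_one pnorm_pos by (fastforce simp: n_def)
  have w_norm: "(\<Sum>j<d k. w k j powr p k) = 1" if k: "k < m" for k
  proof -
    have "pnorm (p k) (d k) (w k) = 1"
      using k n_pos[of k] p_gt_one[OF k] pnorm_normalize[of "p k" "d k" "\<lambda>j. \<bar>u k j\<bar>"]
      by (simp add: w_def[abs_def] n_def pnorm_def)
    then show ?thesis
      using p_gt_one[OF k] n_pos pnorm_eq_1_imp_sum[of "p k" "d k" "w k"] by (simp add: w_def abs_of_pos)
  qed
  have "(\<lambda>k j. \<bar>u k j\<bar>) = (\<lambda>k j. n k * w k j)"
    using n_pos by (simp add: w_def fun_eq_iff less_imp_neq[symmetric])
  then have "\<bar>multiform m d f u\<bar> \<le> (\<Prod>k<m. n k) * multiform m d f w"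
    using abs_multiform_le[OF f_nonneg, of u] by (simp add: multiform_scale)
  also have "\<dots> \<le> (\<Prod>k<m. n k) * Lam (ratio_max x)"
  proof (intro mult_left_mono prod_nonneg)
    show "multiform m d f w \<le> Lam (ratio_max x)"
      by (rule multiform_le_Lam_ratio_max[OF assms _ w_norm]) (simp add: w_def n_pos less_imp_le)
  qed (use n_pos in \<open>auto intro: less_imp_le\<close>)
  finally have "\<bar>multiform m d f u\<bar> \<le> (\<Prod>k<m. n k) * Lam (ratio_max x)" .
  moreover have "(\<Prod>k<m. n k) = (\<Prod>k<m. pnorm (p k) (d k) (u k))"
    by (simp add: n_def)
  moreover have "0 < (\<Prod>k<m. n k)"
    using n_pos by (simp add: prod_pos)
  ultimately show "\<bar>multiform m d f u\<bar> / (\<Prod>k<m. pnorm (p k) (d k) (u k)) \<le> Lam (ratio_max x)"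
    by (simp add: divide_le_eq mult.commute)
qed

subsection \<open>Monotonicity of the bounds\<close>

lemma ratio_step_eq:
  assumes "positive x" "l \<in> others" "j < d l"
  shows "Z (step x) l j / step x l j = Znorm x l * (Z (step x) l j / Z x l j)"
  using assms Z_pos[OF assms] Znorm_pos[OF assms(1,2)] by (simp add: step_eq)

lemma ratio_min_step_ge:
  assumes x: "positive x" and "\<forall>l\<in>others. 0 < c l" "\<forall>l\<in>others. \<forall>j<d l. c l * x l j \<le> step x l j"
    and "l \<in> others"
  shows "Znorm x l * scale_factor c l \<le> ratio_min (step x) l"
  unfolding ratio_min_def
proof (rule Min.boundedI)
  show "(\<lambda>j. Z (step x) l j / step x l j) ` {..<d l} \<noteq> {}"
    using assms(4) d_pos[of l] by auto
  fix r assume "r \<in> (\<lambda>j. Z (step x) l j / step x l j) ` {..<d l}"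
  then obtain j where j: "j < d l" and r: "r = Z (step x) l j / step x l j" by auto
  have cx: "positive (\<lambda>k j. c k * x k j)"
    using x assms(2) by (simp add: positive_def)
  have "scale_factor c l * Z x l j \<le> Z (step x) l j"
    using Z_mono[OF cx _ assms(4) j] assms(3) Z_scale[OF x assms(2,4) j] by simp
  then have "Znorm x l * scale_factor c l \<le> Znorm x l * (Z (step x) l j / Z x l j)"
    using Z_pos[OF x assms(4) j] Znorm_pos[OF x assms(4)] by (simp add: le_divide_eq)
  then show "Znorm x l * scale_factor c l \<le> r"
    using ratio_step_eq[OF x assms(4) j] r by simp
qed simp

lemma ratio_max_step_le:
  assumes "admissible x" "\<forall>l\<in>others. 0 < c l" "\<forall>l\<in>others. \<forall>j<d l. step x l j \<le> c l * x l j"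
    and "l \<in> others"
  shows "ratio_max (step x) l \<le> Znorm x l * scale_factor c l"
  unfolding ratio_max_def
proof (rule Max.boundedI)
  show "(\<lambda>j. Z (step x) l j / step x l j) ` {..<d l} \<noteq> {}"
    using assms(4) d_pos[of l] by auto
  fix r assume "r \<in> (\<lambda>j. Z (step x) l j / step x l j) ` {..<d l}"
  then obtain j where j: "j < d l" and r: "r = Z (step x) l j / step x l j" by auto
  have x: "positive x" using assms(1) by (simp add: admissible_def)
  have "positive (step x)"
    using admissible_step[OF assms(1)] by (simp add: admissible_def)
  then have "Z (step x) l j \<le> scale_factor c l * Z x l j"
    using Z_mono[OF _ assms(3) assms(4) j] Z_scale[OF x assms(2,4) j] by simp
  then have "Znorm x l * (Z (step x) l j / Z x l j) \<le> Znorm x l * scale_factor c l"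
    using Z_pos[OF x assms(4) j] Znorm_pos[OF x assms(4)] by (simp add: divide_le_eq)
  then show "r \<le> Znorm x l * scale_factor c l"
    using ratio_step_eq[OF x assms(4) j] r by simp
qed simp

lemma Lam_scale_factor:
  assumes "\<forall>l\<in>others. 0 < c l"
  shows "Lam (\<lambda>l. n l * scale_factor c l) = (\<Prod>l\<in>others. n l powr lam_exp l * c l powr (1 - 1 / s))"
proof -
  define C where "C = (\<Prod>k\<in>others. c k)"
  have "0 < C" unfolding C_def using assms(1) by (intro prod_pos) simp
  have factor: "(n l * scale_factor c l) powr lam_exp l = n l powr lam_exp l * C powr (q / s) / c l powr (1 / s)"
    if l: "l \<in> others" for l
  proof -
    have "1 / (p l - 1) * lam_exp l = 1 / s"
      using l p_gt_one[of l] s_pos by (simp add: lam_exp_def field_simps)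
    then have "scale_factor c l powr lam_exp l = (C powr q / c l) powr (1 / s)"
      by (simp only: scale_factor_def C_def[symmetric] powr_powr)
    then show ?thesis
      by (simp add: powr_mult powr_divide powr_powr)
  qed
  have "(\<Prod>l\<in>others. C powr (q / s)) = C powr (\<Sum>l\<in>others. q / s)"
    by (rule powr_sum[symmetric]) (use \<open>0 < C\<close> in simp)
  also have "(\<Sum>l\<in>others. q / s) = q * (real (card others) / s)"
    by simp
  also have "\<dots> = 1"
    using card_others_div_s q_gt_1 by simp
  finally have "(\<Prod>l\<in>others. C powr (q / s)) = C"
    using \<open>0 < C\<close> by simp
  moreover have "c l powr (1 - 1 / s) = c l / c l powr (1 / s)" if "l \<in> others" for l
    using bspec[OF assms(1) that] by (simp add: powr_diff)
  ultimately show ?thesis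
    unfolding Lam_def using factor
    by (simp add: prod.distrib prod_dividef C_def)
qed

lemma Lam_ratio_min_le_step:
  assumes "admissible x"
  shows "Lam (ratio_min x) \<le> Lam (ratio_min (step x))"
proof -
  define c where "c l = ratio_min x l / Znorm x l" for l
  have x: "positive x" using assms by (simp add: admissible_def)
  have c_pos: "\<forall>l\<in>others. 0 < c l"
    using ratio_min_pos[OF x] Znorm_pos[OF x] by (simp add: c_def)
  have c_le_1: "c l \<le> 1" if "l \<in> others" for l
    using ratio_min_le_Znorm[OF assms that] Znorm_pos[OF x that] by (simp add: c_def)
  have c_le_step: "\<forall>l\<in>others. \<forall>j<d l. c l * x l j \<le> step x l j"
  proof (intro ballI allI impI)
    fix l j assume "l \<in> others" "j < d l"
    then show "c l * x l j \<le> step x l j"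
      using ratio_min_le[OF x, of l j] Znorm_pos[OF x, of l] by (simp add: c_def step_eq divide_right_mono)
  qed
  have "Lam (ratio_min x) = (\<Prod>l\<in>others. Znorm x l powr lam_exp l * c l powr lam_exp l)"
    unfolding Lam_def
  proof (intro prod.cong refl)
    fix l assume "l \<in> others"
    then show "ratio_min x l powr lam_exp l = Znorm x l powr lam_exp l * c l powr lam_exp l"
      using Znorm_pos[OF x, of l] by (simp add: c_def flip: powr_mult)
  qed
  also have "\<dots> \<le> (\<Prod>l\<in>others. Znorm x l powr lam_exp l * c l powr (1 - 1 / s))"
    using c_pos c_le_1 lam_exp_ge
    by (intro prod_mono conjI mult_left_mono powr_mono') (auto intro: less_imp_le)
  also have "\<dots> = Lam (\<lambda>l. Znorm x l * scale_factor c l)"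
    using Lam_scale_factor[OF c_pos] by simp
  also have "\<dots> \<le> Lam (ratio_min (step x))"
    using ratio_min_step_ge[OF x c_pos c_le_step] Znorm_pos[OF x] c_pos
    by (intro Lam_mono) (auto simp: scale_factor_def less_imp_le)
  finally show ?thesis .
qed

lemma Lam_ratio_max_step_le:
  assumes "admissible x"
  shows "Lam (ratio_max (step x)) \<le> Lam (ratio_max x)"
proof -
  define c where "c l = ratio_max x l / Znorm x l" for l
  have x: "positive x" using assms by (simp add: admissible_def)
  have c_pos: "\<forall>l\<in>others. 0 < c l"
    using ratio_max_pos[OF x] Znorm_pos[OF x] by (simp add: c_def)
  have c_ge_1: "1 \<le> c l" if "l \<in> others" for l
    using Znorm_le_ratio_max[OF assms that] Znorm_pos[OF x that] by (simp add: c_def)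
  have step_le_c: "\<forall>l\<in>others. \<forall>j<d l. step x l j \<le> c l * x l j"
  proof (intro ballI allI impI)
    fix l j assume "l \<in> others" "j < d l"
    then show "step x l j \<le> c l * x l j"
      using ratio_max_ge[OF x, of l j] Znorm_pos[OF x, of l] by (simp add: c_def step_eq divide_right_mono)
  qed
  have "Lam (ratio_max (step x)) \<le> Lam (\<lambda>l. Znorm x l * scale_factor c l)"
    using ratio_max_step_le[OF assms c_pos step_le_c] ratio_max_pos admissible_step[OF assms]
    by (intro Lam_mono) (auto simp: admissible_def less_imp_le)
  also have "\<dots> = (\<Prod>l\<in>others. Znorm x l powr lam_exp l * c l powr (1 - 1 / s))"
    using Lam_scale_factor[OF c_pos] by simp
  also have "\<dots> \<le> (\<Prod>l\<in>others. Znorm x l powr lam_exp l * c l powr lam_exp l)"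
    using c_ge_1 lam_exp_ge
    by (intro prod_mono conjI mult_left_mono powr_mono) auto
  also have "\<dots> = Lam (ratio_max x)"
    unfolding Lam_def
  proof (intro prod.cong refl)
    fix l assume "l \<in> others"
    then show "Znorm x l powr lam_exp l * c l powr lam_exp l = ratio_max x l powr lam_exp l"
      using Znorm_pos[OF x, of l] by (simp add: c_def flip: powr_mult)
  qed
  finally show ?thesis .
qed

lemma hgpm_x_Suc: "hgpm_x m d p f i x0 (Suc k) = step (hgpm_x m d p f i x0 k)"
  by (simp add: hgpm_x_def)

lemma admissible_hgpm_x: "admissible x0 \<Longrightarrow> admissible (hgpm_x m d p f i x0 k)"
  by (induction k) (simp_all add: hgpm_x_def admissible_step)

lemma hgpm_lam_minus_eq:
  "admissible x0 \<Longrightarrow> hgpm_lam_minus m d p f i x0 (Suc k) = Lam (ratio_min (hgpm_x m d p f i x0 k))"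
  using admissible_hgpm_x[of x0 k] Min_ratio_powr
  by (simp add: hgpm_lam_minus_def Lam_def lam_exp_def s_def q_def admissible_def)

lemma hgpm_lam_plus_eq:
  "admissible x0 \<Longrightarrow> hgpm_lam_plus m d p f i x0 (Suc k) = Lam (ratio_max (hgpm_x m d p f i x0 k))"
  using admissible_hgpm_x[of x0 k] Max_ratio_powr
  by (simp add: hgpm_lam_plus_def Lam_def lam_exp_def s_def q_def admissible_def)

end

theorem proposition5:
  fixes m :: nat and d :: "nat \<Rightarrow> nat" and p :: "nat \<Rightarrow> real"
    and f :: "(nat \<Rightarrow> nat) \<Rightarrow> real" and i :: nat
    and x0 :: "nat \<Rightarrow> nat \<Rightarrow> real" and \<epsilon> :: real
  assumes m2: "m \<ge> 2"
    and dpos: "\<forall>k<m. d k \<ge> 1"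
    and fnonneg: "\<forall>J\<in>idx m d. f J \<ge> 0"
    and wirr: "weakly_irreducible m d f"
    and prange: "\<forall>k<m. 1 < p k"
    and i: "i < m"
    and icond: "\<forall>k<m. k \<noteq> i \<longrightarrow> (real m - 1) * hconj (p i) \<le> p k"
    and icond2: "m = 2 \<longrightarrow> (\<forall>k<m. k \<noteq> i \<longrightarrow> p i \<le> p k)"
    and eps: "\<epsilon> > 0"
    and x0pos: "\<forall>l<m. l \<noteq> i \<longrightarrow> (\<forall>j<d l. x0 l j > 0)"
    and x0norm: "\<forall>l<m. l \<noteq> i \<longrightarrow> pnorm (p l) (d l) (x0 l) = 1"
  shows "(\<forall>k\<ge>1.
            hgpm_lam_minus m d p f i x0 k \<le> hgpm_lam_minus m d p f i x0 (k + 1) \<and>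
            hgpm_lam_minus m d p f i x0 (k + 1) \<le> tnorm m d p f \<and>
            tnorm m d p f \<le> hgpm_lam_plus m d p f i x0 (k + 1) \<and>
            hgpm_lam_plus m d p f i x0 (k + 1) \<le> hgpm_lam_plus m d p f i x0 k)
       \<and> (\<forall>k\<ge>1. hgpm_lam_plus m d p f i x0 k - hgpm_lam_minus m d p f i x0 k < \<epsilon> \<and>
             (\<forall>k'\<in>{1..<k}. \<not> (hgpm_lam_plus m d p f i x0 k' - hgpm_lam_minus m d p f i x0 k' < \<epsilon>))
           \<longrightarrow> \<bar>(hgpm_lam_minus m d p f i x0 k + hgpm_lam_plus m d p f i x0 k) / 2 - tnorm m d p f\<bar> < \<epsilon>)"
proof -
  interpret hgpm_setting m d p f i
    using m2 dpos fnonneg wirr prange i icond by unfold_locales simp_all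
  let ?lm = "hgpm_lam_minus m d p f i x0" and ?lp = "hgpm_lam_plus m d p f i x0"
  have x0: "admissible x0"
    using x0pos x0norm by (simp add: admissible_def positive_def)
  have bounds: "?lm (Suc k) \<le> tnorm m d p f \<and> tnorm m d p f \<le> ?lp (Suc k)" for k
    using Lam_ratio_min_le_tnorm tnorm_le_Lam_ratio_max admissible_hgpm_x[OF x0]
    by (simp add: hgpm_lam_minus_eq[OF x0] hgpm_lam_plus_eq[OF x0])
  have mono: "?lm (Suc k) \<le> ?lm (Suc (Suc k)) \<and> ?lp (Suc (Suc k)) \<le> ?lp (Suc k)" for k
    using Lam_ratio_min_le_step Lam_ratio_max_step_le admissible_hgpm_x[OF x0]
    by (simp add: hgpm_lam_minus_eq[OF x0] hgpm_lam_plus_eq[OF x0] hgpm_x_Suc)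
  show ?thesis
  proof (rule conjI; intro allI impI)
    fix k :: nat assume "1 \<le> k"
    then obtain k' where "k = Suc k'" by (cases k) auto
    then show "?lm k \<le> ?lm (k + 1) \<and> ?lm (k + 1) \<le> tnorm m d p f \<and>
               tnorm m d p f \<le> ?lp (k + 1) \<and> ?lp (k + 1) \<le> ?lp k"
      using mono[of k'] bounds[of "Suc k'"] by simp
  next
    fix k :: nat assume "1 \<le> k" and stop: "?lp k - ?lm k < \<epsilon> \<and>
                          (\<forall>k'\<in>{1..<k}. \<not> ?lp k' - ?lm k' < \<epsilon>)"
    then obtain k' where "k = Suc k'" by (cases k) auto
    then show "\<bar>(?lm k + ?lp k) / 2 - tnorm m d p f\<bar> < \<epsilon>"
      using bounds[of k'] stop by (simp add: abs_less_iff field_simps)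
  qed
qed

end
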